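(* Assume that \[ \sum_{i\geq j\geq 0}2^{-(i+j)}h_{i,j}(t)\geq 1/2 \] for all integers $t\geq 1$. Then $\tilde c_t\leq 1/2\leq c_t$ holds for all integers $t\geq 1$.
   Context: $s(n)$ denotes the binary sum of digits of $n\ge0$. For $t\ge0$, $c_t$ (resp. $\tilde c_t$) is the asymptotic density of $\{n\ge0: s(n+t)\ge s(n)\}$ (resp. $\{n\ge 0: s(n+t)>s(n)\}$). A hyperbinary expansion of a nonnegative integer $n$ is a sequence $(\varepsilon_{\nu-1},\ldots,\varepsilon_0)\in \{0,1,2\}^{\nu}$ ($\nu\ge0$) with $\sum_{0\leq i<\nu}\varepsilon_i2^i=n$; it is proper if $\nu=0$ or $\varepsilon_{\nu-1}\neq 0$. For $i,j\ge0$ and $t\ge1$, $h_{i,j}(t)$ is the number of proper hyperbinary expansions of $t-1$ having exactly $i$ digits equal to $2$ and exactly $j$ digits equal to $0$. *)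

theory Defs
  imports "HOL-Analysis.Analysis"
begin

fun bsum :: "nat \<Rightarrow> nat" where
  "bsum n = (if n = 0 then 0 else n mod 2 + bsum (n div 2))"

definition asymp_density :: "nat set \<Rightarrow> real" where
  "asymp_density A = lim (\<lambda>N. real (card {n\<in>A. n < N}) / real N)"

definition c_t :: "nat \<Rightarrow> real" where
  "c_t t = asymp_density {n. bsum (n + t) \<ge> bsum n}"

definition c_tilde :: "nat \<Rightarrow> real" where
  "c_tilde t = asymp_density {n. bsum (n + t) > bsum n}"

text \<open>Hyperbinary expansions: digit lists, least significant digit first,
  so the list [e_0, ..., e_(nu-1)] represents the sequence (e_(nu-1),...,e_0).\<close>
definition hb_value :: "nat list \<Rightarrow> nat" where
  "hb_value es = (\<Sum>i<length es. es ! i * 2 ^ i)"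

definition proper_hyperbinary :: "nat \<Rightarrow> nat list \<Rightarrow> bool" where
  "proper_hyperbinary n es \<longleftrightarrow>
     set es \<subseteq> {0, 1, 2} \<and> hb_value es = n \<and> (es = [] \<or> last es \<noteq> 0)"

definition h :: "nat \<Rightarrow> nat \<Rightarrow> nat \<Rightarrow> nat" where
  "h i j t = card {es. proper_hyperbinary (t - 1) es \<and>
                       count_list es 2 = i \<and> count_list es 0 = j}"

end

theory Submission
  imports Defs "HOL-Real_Asymp.Real_Asymp"
begin

text \<open>Write \<open>d\<^sub>t(n) = s(n + t) - s(n)\<close> and let \<open>M(n, k)\<close> be the sum of
  \<open>2^-(#2 + #0)\<close> over the proper hyperbinary expansions of \<open>n\<close> with at least \<open>k\<close> more
  digits 2 than digits 0; the hypothesis says \<open>M(n, 0) \<ge> 1/2\<close> for every \<open>n\<close>.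
  Splitting \<open>n < 2^(L+1)\<close> by parity gives recursions in \<open>t\<close> for the number of
  \<open>n < 2^L\<close> with \<open>d\<^sub>t(n) \<ge> k\<close> (or \<open>\<le> k\<close>), and splitting off the last digit of an
  expansion gives matching recursions for \<open>M\<close>.  Induction on \<open>L\<close> then yields
  \<open>#{n < 2^L. d\<^sub>t(n) \<ge> 0} \<ge> 2^L M(2^L + t - 1, 0)\<close> and
  \<open>#{n < 2^L. d\<^sub>t(n) \<le> 0} \<ge> 2^L M(2^L - t - 1, 0) - 2t\<close>.
  Since \<open>d\<^sub>t(a 2^K + r) = d\<^sub>t(r)\<close> whenever \<open>r + t < 2^K\<close>, all blocks of length \<open>2^K\<close>
  have nearly the same count, so the densities exist and are the limits along \<open>N = 2^L\<close>;
  there the two bounds give \<open>c\<^sub>t \<ge> 1/2\<close> and \<open>c\<tilde>\<^sub>t \<le> 1 - 1/2\<close>.\<close>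

section \<open>Hyperbinary expansions\<close>

lemma hb_value_Nil [simp]: "hb_value [] = 0"
  by (simp add: hb_value_def)

lemma hb_value_Cons [simp]: "hb_value (e # es) = e + 2 * hb_value es"
proof -
  have "hb_value (e # es) = (\<Sum>i<Suc (length es). (e # es) ! i * 2 ^ i)"
    by (simp add: hb_value_def)
  also have "\<dots> = e + (\<Sum>i<length es. (e # es) ! Suc i * 2 ^ Suc i)"
    by (subst sum.lessThan_Suc_shift) simp
  also have "\<dots> = e + 2 * hb_value es"
    by (simp add: hb_value_def sum_distrib_left mult.left_commute)
  finally show ?thesis .
qed

lemma proper_hyperbinary_Nil: "proper_hyperbinary n [] \<longleftrightarrow> n = 0"
  by (auto simp: proper_hyperbinary_def)

lemma proper_hyperbinary_Cons:
  "proper_hyperbinary n (e # es) \<longleftrightarrow>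
     e \<le> 2 \<and> n = e + 2 * hb_value es \<and> proper_hyperbinary (hb_value es) es \<and> (es = [] \<longrightarrow> e \<noteq> 0)"
  by (cases es) (auto simp: proper_hyperbinary_def)

lemma nat_zero_odd_even_cases:
  fixes n :: nat
  obtains "n = 0" | v where "n = 2 * v + 1" | v where "n = 2 * v" "v \<ge> 1"
  by (cases "even n") (auto elim!: evenE oddE, fastforce)

definition hyperbinary_expansions :: "nat \<Rightarrow> nat list set" where
  "hyperbinary_expansions n = {es. proper_hyperbinary n es}"

lemma hyperbinary_expansions_0: "hyperbinary_expansions 0 = {[]}"
proof -
  have "es = []" if "proper_hyperbinary 0 es" for es
    using that by (induction es) (auto simp: proper_hyperbinary_Cons)
  then show ?thesis
    by (auto simp: hyperbinary_expansions_def proper_hyperbinary_Nil)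
qed

lemma hyperbinary_expansions_odd:
  "hyperbinary_expansions (2 * v + 1) = Cons 1 ` hyperbinary_expansions v"
proof -
  have "proper_hyperbinary (2 * v + 1) es \<longleftrightarrow> (\<exists>es'. es = 1 # es' \<and> proper_hyperbinary v es')" for es
    by (cases es) (auto simp: proper_hyperbinary_Nil proper_hyperbinary_Cons
                        proper_hyperbinary_def[of "hb_value _"] proper_hyperbinary_def[of v], presburger+)
  then show ?thesis
    by (auto simp: hyperbinary_expansions_def)
qed

lemma hyperbinary_expansions_even:
  assumes "v \<ge> 1"
  shows "hyperbinary_expansions (2 * v) =
           Cons 0 ` hyperbinary_expansions v \<union> Cons 2 ` hyperbinary_expansions (v - 1)"
proof -
  have "proper_hyperbinary (2 * v) (e # es) \<longleftrightarrow>
          e = 0 \<and> proper_hyperbinary v es \<or> e = 2 \<and> proper_hyperbinary (v - 1) es" for e es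
  proof -
    have "proper_hyperbinary (2 * v) (e # es) \<longleftrightarrow>
            (e = 0 \<and> hb_value es = v \<or> e = 2 \<and> hb_value es = v - 1) \<and>
            proper_hyperbinary (hb_value es) es"
      using assms unfolding proper_hyperbinary_Cons by auto presburger+
    then show ?thesis
      by (auto simp: proper_hyperbinary_def)
  qed
  moreover have "\<not> proper_hyperbinary (2 * v) []"
    using assms by (simp add: proper_hyperbinary_Nil)
  ultimately have "proper_hyperbinary (2 * v) es \<longleftrightarrow>
      (\<exists>es'. es = 0 # es' \<and> proper_hyperbinary v es') \<or>
      (\<exists>es'. es = 2 # es' \<and> proper_hyperbinary (v - 1) es')" for es
    by (cases es) auto
  then show ?thesis
    by (auto simp: hyperbinary_expansions_def)
qed

lemma finite_hyperbinary_expansions: "finite (hyperbinary_expansions n)"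
proof (induction n rule: less_induct)
  case (less n)
  show ?case
  proof (cases n rule: nat_zero_odd_even_cases)
    case 1
    then show ?thesis by (simp add: hyperbinary_expansions_0)
  next
    case (2 v)
    then have "finite (hyperbinary_expansions v)"
      using less by simp
    then show ?thesis
      unfolding 2 hyperbinary_expansions_odd by simp
  next
    case (3 v)
    then show ?thesis using less[of v] less[of "v - 1"] by (simp add: hyperbinary_expansions_even)
  qed
qed

definition hb_weight :: "nat list \<Rightarrow> real" where
  "hb_weight es = (1 / 2) ^ (count_list es 2 + count_list es 0)"

definition hb_excess :: "nat list \<Rightarrow> int" where
  "hb_excess es = int (count_list es 2) - int (count_list es 0)"

definition hb_mass :: "nat \<Rightarrow> int \<Rightarrow> real" where
  "hb_mass n k = (\<Sum>es\<in>hyperbinary_expansions n. if k \<le> hb_excess es then hb_weight es else 0)"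

lemma hb_weight_Cons:
  "hb_weight (e # es) = (if e = 0 \<or> e = 2 then hb_weight es / 2 else hb_weight es)"
  by (simp add: hb_weight_def)

lemma hb_excess_Cons:
  "hb_excess (e # es) = hb_excess es + (if e = 2 then 1 else if e = 0 then -1 else 0)"
  by (simp add: hb_excess_def)

lemma hb_mass_0: "hb_mass 0 k = (if k \<le> 0 then 1 else 0)"
  by (simp add: hb_mass_def hyperbinary_expansions_0 hb_excess_def hb_weight_def)

lemma hb_mass_odd: "hb_mass (2 * v + 1) k = hb_mass v k"
  unfolding hb_mass_def hyperbinary_expansions_odd
  by (simp add: sum.reindex hb_excess_Cons hb_weight_Cons cong: if_cong)

lemma hb_mass_even:
  assumes "v \<ge> 1"
  shows "hb_mass (2 * v) k = (hb_mass v (k + 1) + hb_mass (v - 1) (k - 1)) / 2"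
proof -
  let ?f = "\<lambda>es. if k \<le> hb_excess es then hb_weight es else 0"
  have "hb_mass (2 * v) k = sum ?f (Cons 0 ` hyperbinary_expansions v)
                             + sum ?f (Cons 2 ` hyperbinary_expansions (v - 1))"
    unfolding hb_mass_def hyperbinary_expansions_even[OF assms]
    by (rule sum.union_disjoint) (auto simp: finite_hyperbinary_expansions)
  also have "\<dots> = (\<Sum>es\<in>hyperbinary_expansions v. if k + 1 \<le> hb_excess es then hb_weight es / 2 else 0)
                 + (\<Sum>es\<in>hyperbinary_expansions (v - 1). if k - 1 \<le> hb_excess es then hb_weight es / 2 else 0)"
    by (simp add: sum.reindex hb_excess_Cons hb_weight_Cons algebra_simps cong: if_cong)
  also have "\<dots> = (hb_mass v (k + 1) + hb_mass (v - 1) (k - 1)) / 2"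
    unfolding hb_mass_def add_divide_distrib sum_divide_distrib by (auto intro!: sum.cong arg_cong2[where f = "(+)"])
  finally show ?thesis .
qed

lemma infsum_card_fibres:
  fixes g :: "'b \<Rightarrow> real"
  assumes "finite S"
  shows "(\<Sum>\<^sub>\<infinity>y\<in>D. real (card {x\<in>S. f x = y}) * g y) = (\<Sum>x\<in>S. if f x \<in> D then g (f x) else 0)"
proof -
  let ?c = "\<lambda>y. real (card {x\<in>S. f x = y}) * g y"
  have "(\<Sum>\<^sub>\<infinity>y\<in>D. ?c y) = (\<Sum>\<^sub>\<infinity>y\<in>D \<inter> f ` S. ?c y)"
    using assms by (intro infsum_cong_neutral) (auto simp: card_eq_0_iff)
  also have "\<dots> = (\<Sum>y\<in>f ` S. if y \<in> D then ?c y else 0)"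
    using assms by (subst Int_commute) (simp add: sum.inter_restrict)
  also have "\<dots> = (\<Sum>y\<in>f ` S. \<Sum>x\<in>{x\<in>S. f x = y}. if f x \<in> D then g (f x) else 0)"
    by (rule sum.cong) auto
  also have "\<dots> = (\<Sum>x\<in>S. if f x \<in> D then g (f x) else 0)"
    using assms by (intro sum.group) auto
  finally show ?thesis .
qed

lemma infsum_h_eq_hb_mass:
  "(\<Sum>\<^sub>\<infinity>(i, j)\<in>{(i, j). j \<le> i}. real (h i j t) / 2 ^ (i + j)) = hb_mass (t - 1) 0"
proof -
  let ?S = "hyperbinary_expansions (t - 1)"
  let ?f = "\<lambda>es. (count_list es 2, count_list es 0)"
  have "h i j t = card {es\<in>?S. ?f es = (i, j)}" for i j
    unfolding h_def hyperbinary_expansions_def by (rule arg_cong[where f = card]) auto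
  then have "(\<Sum>\<^sub>\<infinity>(i, j)\<in>{(i, j). j \<le> i}. real (h i j t) / 2 ^ (i + j))
      = (\<Sum>\<^sub>\<infinity>y\<in>{(i, j). j \<le> i}. real (card {es\<in>?S. ?f es = y}) * (1 / 2) ^ (fst y + snd y))"
    by (intro infsum_cong) (auto simp: power_one_over)
  also have "\<dots> = hb_mass (t - 1) 0"
    by (subst infsum_card_fibres)
       (auto simp: finite_hyperbinary_expansions hb_mass_def hb_excess_def hb_weight_def intro!: sum.cong)
  finally show ?thesis .
qed

section \<open>Differences of binary digit sums\<close>

declare bsum.simps [simp del]

lemma bsum_rec: "bsum n = n mod 2 + bsum (n div 2)"
  by (cases "n = 0") (simp_all add: bsum.simps[of n] bsum.simps[of 0])

lemma bsum_0 [simp]: "bsum 0 = 0"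
  by (simp add: bsum.simps)

lemma bsum_double [simp]: "bsum (2 * m) = bsum m"
  by (subst bsum_rec) simp

lemma bsum_double_plus_1 [simp]: "bsum (2 * m + 1) = bsum m + 1"
  by (subst bsum_rec) simp

lemma bsum_double_add: "b < 2 \<Longrightarrow> bsum (2 * m + b) = bsum m + b"
  using bsum_double_plus_1[of m] by (cases b) auto

lemma bsum_mult_power2_add: "r < 2 ^ K \<Longrightarrow> bsum (a * 2 ^ K + r) = bsum a + bsum r"
proof (induction K arbitrary: r)
  case (Suc K)
  have "bsum (a * 2 ^ Suc K + r) = bsum (2 * (a * 2 ^ K + r div 2) + r mod 2)"
    by (rule arg_cong[where f = bsum]) simp
  also have "\<dots> = bsum (a * 2 ^ K + r div 2) + r mod 2"
    by (rule bsum_double_add) simp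
  also have "\<dots> = bsum a + bsum r"
    using Suc.IH[of "r div 2"] Suc.prems bsum_rec[of r] by (simp add: less_mult_imp_div_less)
  finally show ?case .
qed simp

definition digit_diff :: "nat \<Rightarrow> nat \<Rightarrow> int" where
  "digit_diff t n = int (bsum (n + t)) - int (bsum n)"

lemma digit_diff_even_even: "digit_diff (2 * w) (2 * q) = digit_diff w q"
proof -
  have "2 * q + 2 * w = 2 * (q + w)"
    by simp
  then show ?thesis
    unfolding digit_diff_def by (simp only: bsum_double)
qed

lemma digit_diff_even_odd: "digit_diff (2 * w) (2 * q + 1) = digit_diff w q"
proof -
  have "2 * q + 1 + 2 * w = 2 * (q + w) + 1"
    by simp
  then show ?thesis
    unfolding digit_diff_def by (simp only: bsum_double_plus_1)
qed

lemma digit_diff_odd_even: "digit_diff (2 * w + 1) (2 * q) = digit_diff w q + 1"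
proof -
  have "2 * q + (2 * w + 1) = 2 * (q + w) + 1"
    by simp
  then show ?thesis
    unfolding digit_diff_def by (simp only: bsum_double bsum_double_plus_1)
qed

lemma digit_diff_odd_odd: "digit_diff (2 * w + 1) (2 * q + 1) = digit_diff (w + 1) q - 1"
proof -
  have "2 * q + 1 + (2 * w + 1) = 2 * (q + (w + 1))"
    by simp
  then show ?thesis
    unfolding digit_diff_def by (simp only: bsum_double bsum_double_plus_1)
qed

lemma digit_diff_mult_power2_add: "r + t < 2 ^ K \<Longrightarrow> digit_diff t (a * 2 ^ K + r) = digit_diff t r"
  using bsum_mult_power2_add[of "r + t" K a] bsum_mult_power2_add[of r K a]
  by (simp add: digit_diff_def add.assoc)

definition digit_diff_count :: "nat \<Rightarrow> (int \<Rightarrow> bool) \<Rightarrow> nat \<Rightarrow> real" where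
  "digit_diff_count t P N = (\<Sum>n<N. of_bool (P (digit_diff t n)))"

lemma digit_diff_count_eq_card:
  "digit_diff_count t P N = card {n \<in> {n. P (digit_diff t n)}. n < N}"
proof -
  have "digit_diff_count t P N = card ({..<N} \<inter> {n. P (digit_diff t n)})"
    unfolding digit_diff_count_def by (rule sum_of_bool_eq) auto
  also have "{..<N} \<inter> {n. P (digit_diff t n)} = {n \<in> {n. P (digit_diff t n)}. n < N}"
    by auto
  finally show ?thesis .
qed

lemma sum_lessThan_double: "(\<Sum>i<2 * (m::nat). g i) = (\<Sum>i<m. g (2 * i) + g (2 * i + 1))"
  by (induction m) (simp_all add: add.assoc)

lemma digit_diff_count_even:
  "digit_diff_count (2 * w) P (2 * m) = 2 * digit_diff_count w P m"
  unfolding digit_diff_count_def sum_lessThan_double digit_diff_even_even digit_diff_even_odd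
  by (simp add: sum_distrib_left)

lemma digit_diff_count_odd:
  "digit_diff_count (2 * w + 1) P (2 * m) =
     digit_diff_count w (\<lambda>d. P (d + 1)) m + digit_diff_count (w + 1) (\<lambda>d. P (d - 1)) m"
  unfolding digit_diff_count_def sum_lessThan_double digit_diff_odd_even digit_diff_odd_odd
  by (simp add: sum.distrib)

lemma digit_diff_count_not:
  "digit_diff_count t (\<lambda>d. \<not> P d) N = real N - digit_diff_count t P N"
  by (induction N) (simp_all add: digit_diff_count_def)

lemma digit_diff_count_nonneg: "0 \<le> digit_diff_count t P N"
  unfolding digit_diff_count_def by (rule sum_nonneg) simp

section \<open>Counting on dyadic intervals\<close>

lemma hb_mass_le_digit_diff_count_ge:
  "t \<le> 2 ^ L \<Longrightarrow> 2 ^ L * hb_mass (2 ^ L + t - 1) k \<le> digit_diff_count t (\<lambda>d. k \<le> d) (2 ^ L)"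
proof (induction L arbitrary: t k)
  case 0
  then consider "t = 0" | "t = 1"
    by fastforce
  then show ?case
    using hb_mass_odd[of 0 k] by cases (simp_all add: digit_diff_count_def digit_diff_def hb_mass_0)
next
  case (Suc L)
  show ?case
  proof (cases "even t")
    case True
    then obtain w where t: "t = 2 * w"
      by blast
    have "(1::nat) \<le> 2 ^ L"
      by simp
    then have "2 ^ Suc L + t - 1 = 2 * (2 ^ L + w - 1) + 1"
      unfolding t power_Suc by linarith
    then have "2 ^ Suc L * hb_mass (2 ^ Suc L + t - 1) k = 2 * (2 ^ L * hb_mass (2 ^ L + w - 1) k)"
      by (simp only: hb_mass_odd power_Suc mult.assoc)
    also have "\<dots> \<le> 2 * digit_diff_count w (\<lambda>d. k \<le> d) (2 ^ L)"
      using Suc.IH[of w k] Suc.prems t by simp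
    also have "\<dots> = digit_diff_count t (\<lambda>d. k \<le> d) (2 ^ Suc L)"
      unfolding t power_Suc digit_diff_count_even ..
    finally show ?thesis .
  next
    case False
    then obtain w where t: "t = 2 * w + 1"
      using oddE by blast
    have shift: "(\<lambda>d. k \<le> d + 1) = (\<lambda>d. k - 1 \<le> d)" "(\<lambda>d. k \<le> d - 1) = (\<lambda>d. k + 1 \<le> d)"
      by auto
    have e: "2 ^ Suc L + t - 1 = 2 * (2 ^ L + w)" and v: "1 \<le> 2 ^ L + w"
      using t by (simp_all add: Suc_leI)
    have "2 ^ Suc L * hb_mass (2 ^ Suc L + t - 1) k
        = 2 ^ L * hb_mass (2 ^ L + w - 1) (k - 1) + 2 ^ L * hb_mass (2 ^ L + w) (k + 1)"
      unfolding e hb_mass_even[OF v] by (simp add: algebra_simps)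
    also have "\<dots> \<le> digit_diff_count w (\<lambda>d. k - 1 \<le> d) (2 ^ L) + digit_diff_count (w + 1) (\<lambda>d. k + 1 \<le> d) (2 ^ L)"
      using Suc.IH[of w "k - 1"] Suc.IH[of "w + 1" "k + 1"] Suc.prems t by simp
    also have "\<dots> = digit_diff_count t (\<lambda>d. k \<le> d) (2 ^ Suc L)"
      unfolding t power_Suc digit_diff_count_odd shift ..
    finally show ?thesis .
  qed
qed

lemma hb_mass_le_digit_diff_count_le:
  "t < 2 ^ L \<Longrightarrow>
     2 ^ L * hb_mass (2 ^ L - t - 1) (- k) - 2 * real t \<le> digit_diff_count t (\<lambda>d. d \<le> k) (2 ^ L)"
proof (induction L arbitrary: t k)
  case 0
  then show ?case
    by (simp add: digit_diff_count_def digit_diff_def hb_mass_0)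
next
  case (Suc L)
  show ?case
  proof (cases "even t")
    case True
    then obtain w where t: "t = 2 * w"
      by blast
    then have "2 ^ Suc L - t - 1 = 2 * (2 ^ L - w - 1) + 1"
      using Suc.prems by simp
    then have "2 ^ Suc L * hb_mass (2 ^ Suc L - t - 1) (- k) - 2 * real t
        = 2 * (2 ^ L * hb_mass (2 ^ L - w - 1) (- k) - 2 * real w)"
      unfolding t by (simp only: hb_mass_odd) simp
    also have "\<dots> \<le> 2 * digit_diff_count w (\<lambda>d. d \<le> k) (2 ^ L)"
      using Suc.IH[of w k] Suc.prems t by simp
    also have "\<dots> = digit_diff_count t (\<lambda>d. d \<le> k) (2 ^ Suc L)"
      unfolding t power_Suc digit_diff_count_even ..
    finally show ?thesis .
  next
    case False
    then obtain w where t: "t = 2 * w + 1"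
      using oddE by blast
    show ?thesis
    proof (cases "w + 1 < 2 ^ L")
      case True
      have e: "2 ^ Suc L - t - 1 = 2 * (2 ^ L - w - 1)" and v: "1 \<le> 2 ^ L - w - 1"
        using True t by simp_all
      have shift: "(\<lambda>d. d + 1 \<le> k) = (\<lambda>d. d \<le> k - 1)" "(\<lambda>d. d - 1 \<le> k) = (\<lambda>d. d \<le> k + 1)"
        by auto
      have "2 ^ Suc L * hb_mass (2 ^ Suc L - t - 1) (- k) - 2 * real t
          = (2 ^ L * hb_mass (2 ^ L - w - 1) (- k + 1) - 2 * real w)
            + (2 ^ L * hb_mass (2 ^ L - w - 1 - 1) (- k - 1) - 2 * real (w + 1))"
        unfolding e hb_mass_even[OF v] using t by (simp add: algebra_simps)
      also have "\<dots> \<le> digit_diff_count w (\<lambda>d. d \<le> k - 1) (2 ^ L)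
                      + digit_diff_count (w + 1) (\<lambda>d. d \<le> k + 1) (2 ^ L)"
        using Suc.IH[of w "k - 1"] Suc.IH[of "w + 1" "k + 1"] True by simp
      also have "\<dots> = digit_diff_count t (\<lambda>d. d \<le> k) (2 ^ Suc L)"
        unfolding t power_Suc digit_diff_count_odd shift ..
      finally show ?thesis .
    next
      case False
      then have "t + 1 = 2 ^ Suc L"
        using Suc.prems t by simp
      then have "2 ^ Suc L - t - 1 = 0" "real t + 1 = 2 ^ Suc L"
        by (simp, metis of_nat_1 of_nat_add of_nat_numeral of_nat_power)
      then have "2 ^ Suc L * hb_mass (2 ^ Suc L - t - 1) (- k) - 2 * real t \<le> 0"
        using one_le_power[of "2::real" L] by (simp add: hb_mass_0)
      then show ?thesis
        using digit_diff_count_nonneg order_trans by blast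
    qed
  qed
qed

section \<open>Averages over blocks and densities\<close>

lemma sum_lessThan_add: "(\<Sum>i<n + m. g i) = (\<Sum>i<n. g i) + (\<Sum>i<m. g (n + i))" for n m :: nat
  by (induction m) (simp_all add: add.assoc)

lemma sum_lessThan_mult: "(\<Sum>i<q * m. g i) = (\<Sum>a<q. \<Sum>r<m. g (a * m + r))" for q m :: nat
proof (induction q)
  case (Suc q)
  have qm: "Suc q * m = q * m + m"
    by simp
  show ?case
    unfolding qm sum_lessThan_add Suc.IH by simp
qed simp

lemma abs_ratio_diff_le:
  fixes S b c m q r :: real
  assumes m: "0 < m" and q: "1 \<le> q" and r: "0 \<le> r" "r < m" and b: "0 \<le> b" "b \<le> m"
    and S: "\<bar>S - q * b\<bar> \<le> q * c + r"
  shows "\<bar>S / (q * m + r) - b / m\<bar> \<le> c / m + 2 / q"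
proof -
  define N where "N = q * m + r"
  have qm: "0 < q * m" "q * m \<le> N"
    using m q r by (simp_all add: N_def)
  then have N: "0 < N"
    by linarith
  have "S / N - b / m = ((S - q * b) * m - b * r) / (m * N)"
    using m N unfolding N_def by (simp add: field_simps)
  then have "\<bar>S / N - b / m\<bar> = \<bar>(S - q * b) * m - b * r\<bar> / (m * N)"
    using m N by simp
  also have "\<dots> \<le> ((q * c + r) * m + m * r) / (m * N)"
  proof -
    have "\<bar>(S - q * b) * m\<bar> \<le> (q * c + r) * m"
      using m S by (simp add: abs_mult)
    moreover have "\<bar>b * r\<bar> \<le> m * r"
      using b r by (simp add: abs_mult mult_right_mono)
    ultimately have "\<bar>(S - q * b) * m - b * r\<bar> \<le> (q * c + r) * m + m * r"
      by linarith
    then show ?thesis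
      using m N by (simp add: divide_right_mono)
  qed
  also have "\<dots> = (q * c + 2 * r) / N"
    using m N by (simp add: field_simps)
  also have "\<dots> \<le> (q * c + 2 * r) / (q * m)"
    using qm S r by (intro divide_left_mono) auto
  also have "\<dots> \<le> c / m + 2 / q"
    using m q r by (simp add: field_simps)
  finally show ?thesis
    by (simp add: N_def)
qed

lemma average_close_to_block_average:
  fixes f :: "nat \<Rightarrow> real"
  assumes f: "\<And>n. 0 \<le> f n" "\<And>n. f n \<le> 1" and m: "0 < m" "m \<le> N"
    and blocks: "\<And>a. \<bar>(\<Sum>r<m. f (a * m + r)) - (\<Sum>r<m. f r)\<bar> \<le> c"
  shows "\<bar>(\<Sum>n<N. f n) / N - (\<Sum>r<m. f r) / m\<bar> \<le> c / m + 2 / real (N div m)"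
proof -
  define q where "q = N div m"
  define r where "r = N mod m"
  let ?block = "\<lambda>a. \<Sum>r<m. f (a * m + r)"
  have N: "N = q * m + r" and "r < m" and "1 \<le> q"
    using m by (simp_all add: q_def r_def div_greater_zero_iff Suc_le_eq)
  have sum_N: "(\<Sum>n<N. f n) = (\<Sum>a<q. ?block a) + (\<Sum>i<r. f (q * m + i))"
    unfolding N sum_lessThan_add sum_lessThan_mult ..
  have "\<bar>(\<Sum>a<q. ?block a) - q * ?block 0\<bar> \<le> q * c"
  proof -
    have "\<bar>(\<Sum>a<q. ?block a - ?block 0)\<bar> \<le> (\<Sum>a<q. c)"
      using blocks by (intro order_trans[OF sum_abs] sum_mono) simp
    then show ?thesis
      by (simp add: sum_subtractf)
  qed
  moreover have "0 \<le> (\<Sum>i<r. f (q * m + i))" "(\<Sum>i<r. f (q * m + i)) \<le> r"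
    using f sum_bounded_above[of "{..<r}" "\<lambda>i. f (q * m + i)" 1] by (simp_all add: sum_nonneg)
  ultimately have "\<bar>(\<Sum>n<N. f n) - q * ?block 0\<bar> \<le> q * c + r"
    unfolding sum_N by linarith
  moreover have "0 \<le> ?block 0" "?block 0 \<le> m"
    using f sum_bounded_above[of "{..<m}" f 1] by (simp_all add: sum_nonneg)
  ultimately have "\<bar>(\<Sum>n<N. f n) / (real q * real m + real r) - ?block 0 / m\<bar> \<le> c / m + 2 / q"
    using abs_ratio_diff_le[of m q r "?block 0" "\<Sum>n<N. f n" c] m \<open>r < m\<close> \<open>1 \<le> q\<close>
    by simp
  then show ?thesis
    unfolding q_def[symmetric] by (simp add: N)
qed

lemma convergent_average_if_blocks_close:
  fixes f :: "nat \<Rightarrow> real"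
  assumes f: "\<And>n. 0 \<le> f n" "\<And>n. f n \<le> 1"
    and blocks: "\<And>M. \<exists>m\<ge>M. 0 < m \<and> (\<forall>a. \<bar>(\<Sum>r<m. f (a * m + r)) - (\<Sum>r<m. f r)\<bar> \<le> c)"
  shows "convergent (\<lambda>N. (\<Sum>n<N. f n) / N)"
proof -
  let ?avg = "\<lambda>N. (\<Sum>n<N. f n) / N"
  have "Cauchy ?avg"
  proof (rule CauchyI)
    fix e :: real
    assume e: "0 < e"
    obtain M :: nat where M: "4 * c / e < M"
      using reals_Archimedean2 by blast
    obtain m where m: "M \<le> m" "0 < m"
      and close: "\<And>a. \<bar>(\<Sum>r<m. f (a * m + r)) - (\<Sum>r<m. f r)\<bar> \<le> c"
      using blocks by blast
    have "0 \<le> c"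
      using close[of 0] by simp
    have "4 * c / e < m"
      using M m(1) by linarith
    then have cm: "c / m < e / 4"
      using e m(2) by (simp add: field_simps)
    obtain Q :: nat where Q: "8 / e < Q"
      using reals_Archimedean2 by blast
    then have "0 < Q"
      using e by (metis divide_pos_pos of_nat_0_less_iff order.strict_trans zero_less_numeral)
    have near: "\<bar>?avg N - (\<Sum>r<m. f r) / m\<bar> < e / 2" if N: "Q * m \<le> N" for N
    proof -
      have "Q \<le> N div m"
        using div_le_mono[OF N, of m] m(2) by simp
      then have "2 / real (N div m) \<le> 2 / Q"
        using \<open>0 < Q\<close> by (simp add: frac_le)
      also have "\<dots> < e / 4"
        using Q e \<open>0 < Q\<close> by (simp add: field_simps)
      finally have "2 / real (N div m) < e / 4" .
      moreover have "m \<le> N"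
        using N \<open>0 < Q\<close> by (cases Q) auto
      then have "\<bar>?avg N - (\<Sum>r<m. f r) / m\<bar> \<le> c / m + 2 / real (N div m)"
        by (rule average_close_to_block_average[OF f m(2) _ close])
      ultimately show ?thesis
        using cm by linarith
    qed
    show "\<exists>M. \<forall>m\<ge>M. \<forall>n\<ge>M. norm (?avg m - ?avg n) < e"
    proof (intro exI allI impI)
      fix i j
      assume "Q * m \<le> i" "Q * m \<le> j"
      then show "norm (?avg i - ?avg j) < e"
        using near[of i] near[of j] unfolding real_norm_def abs_less_iff by linarith
    qed
  qed
  then show ?thesis
    by (simp add: Cauchy_convergent_iff)
qed

lemma digit_diff_blocks_close:
  fixes P :: "int \<Rightarrow> bool"
  assumes "t \<le> 2 ^ K"
  defines "f \<equiv> \<lambda>n. of_bool (P (digit_diff t n)) :: real"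
  shows "\<bar>(\<Sum>r<2 ^ K. f (a * 2 ^ K + r)) - (\<Sum>r<2 ^ K. f r)\<bar> \<le> t"
proof -
  have "\<bar>f (a * 2 ^ K + r) - f r\<bar> \<le> of_bool (2 ^ K \<le> r + t)" for r
    by (cases "r + t < 2 ^ K") (auto simp: f_def digit_diff_mult_power2_add)
  then have "\<bar>(\<Sum>r<2 ^ K. f (a * 2 ^ K + r)) - (\<Sum>r<2 ^ K. f r)\<bar> \<le> (\<Sum>r<2 ^ K. of_bool (2 ^ K \<le> r + t))"
    unfolding sum_subtractf[symmetric] by (intro order_trans[OF sum_abs] sum_mono)
  also have "\<dots> = card ({..<2 ^ K} \<inter> {r. 2 ^ K \<le> r + t})"
    by (rule sum_of_bool_eq) auto
  also have "\<dots> \<le> card {2 ^ K - t..<2 ^ K}"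
    by (intro of_nat_mono card_mono) auto
  finally show ?thesis
    using assms by simp
qed

lemma convergent_digit_diff_average: "convergent (\<lambda>N. digit_diff_count t P N / N)"
  unfolding digit_diff_count_def
proof (rule convergent_average_if_blocks_close)
  fix M
  define K where "K = max M t"
  have "M \<le> 2 ^ K" "t \<le> 2 ^ K"
    using less_exp[of K] unfolding K_def by linarith+
  then show "\<exists>m\<ge>M. 0 < m \<and> (\<forall>a. \<bar>(\<Sum>r<m. of_bool (P (digit_diff t (a * m + r)))) - (\<Sum>r<m. of_bool (P (digit_diff t r)))\<bar> \<le> real t)"
    using digit_diff_blocks_close by (intro exI[of _ "2 ^ K"]) auto
qed simp_all

lemma digit_diff_density_dyadic:
  "(\<lambda>L. digit_diff_count t P (2 ^ L) / 2 ^ L) \<longlonglongrightarrow> asymp_density {n. P (digit_diff t n)}"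
proof -
  have "asymp_density {n. P (digit_diff t n)} = lim (\<lambda>N. digit_diff_count t P N / N)"
    unfolding asymp_density_def digit_diff_count_eq_card ..
  then have "(\<lambda>N. digit_diff_count t P N / N) \<longlonglongrightarrow> asymp_density {n. P (digit_diff t n)}"
    using convergent_digit_diff_average convergent_LIMSEQ_iff by metis
  moreover have "strict_mono (\<lambda>L. 2 ^ L :: nat)"
    by (simp add: strict_mono_def)
  ultimately show ?thesis
    using LIMSEQ_subseq_LIMSEQ by (fastforce simp: o_def)
qed

lemma half_le_digit_diff_nonneg_ratio:
  assumes mass: "\<And>n. 1 / 2 \<le> hb_mass n 0" and "t \<le> 2 ^ L"
  shows "1 / 2 \<le> digit_diff_count t (\<lambda>d. 0 \<le> d) (2 ^ L) / 2 ^ L"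
proof -
  have "2 ^ L * (1 / 2) \<le> 2 ^ L * hb_mass (2 ^ L + t - 1) 0"
    using mass by simp
  also have "\<dots> \<le> digit_diff_count t (\<lambda>d. 0 \<le> d) (2 ^ L)"
    by (rule hb_mass_le_digit_diff_count_ge[OF assms(2)])
  finally show ?thesis
    by (simp add: field_simps)
qed

lemma digit_diff_pos_ratio_le:
  assumes mass: "\<And>n. 1 / 2 \<le> hb_mass n 0" and "t < 2 ^ L"
  shows "digit_diff_count t (\<lambda>d. 0 < d) (2 ^ L) / 2 ^ L \<le> 1 / 2 + 2 * t / 2 ^ L"
proof -
  have "digit_diff_count t (\<lambda>d. 0 < d) (2 ^ L) = 2 ^ L - digit_diff_count t (\<lambda>d. d \<le> 0) (2 ^ L)"
    using digit_diff_count_not[of t "\<lambda>d. d \<le> 0"] by (simp add: not_le)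
  also have "\<dots> \<le> 2 ^ L - (2 ^ L * hb_mass (2 ^ L - t - 1) 0 - 2 * t)"
    using hb_mass_le_digit_diff_count_le[OF assms(2), of 0] by simp
  also have "\<dots> \<le> 2 ^ L * (1 / 2) + 2 * t"
    using mass[of "2 ^ L - t - 1"] by simp
  finally show ?thesis
    by (simp add: field_simps)
qed

theorem corollary3p4:
  assumes "\<forall>t::nat. t \<ge> 1 \<longrightarrow>
     (\<Sum>\<^sub>\<infinity>(i, j)\<in>{(i, j). j \<le> i}. real (h i j t) / 2 ^ (i + j)) \<ge> 1 / 2"
  shows "\<forall>t::nat. t \<ge> 1 \<longrightarrow> c_tilde t \<le> 1 / 2 \<and> 1 / 2 \<le> c_t t"
proof (intro allI impI conjI)
  fix t :: nat
  have mass: "1 / 2 \<le> hb_mass n 0" for n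
    using assms[rule_format, of "n + 1"] by (simp add: infsum_h_eq_hb_mass)
  have large: "t < 2 ^ L" if "t \<le> L" for L
    using less_exp[of t] power_increasing[OF that, of "2::nat"] by linarith
  have "c_t t = asymp_density {n. 0 \<le> digit_diff t n}"
    unfolding c_t_def digit_diff_def by simp
  then have "(\<lambda>L. digit_diff_count t (\<lambda>d. 0 \<le> d) (2 ^ L) / 2 ^ L) \<longlonglongrightarrow> c_t t"
    using digit_diff_density_dyadic by simp
  moreover have "\<forall>L\<ge>t. 1 / 2 \<le> digit_diff_count t (\<lambda>d. 0 \<le> d) (2 ^ L) / 2 ^ L"
    using half_le_digit_diff_nonneg_ratio[OF mass] large by (simp add: less_imp_le)
  ultimately show "1 / 2 \<le> c_t t"
    by (blast intro: LIMSEQ_le_const)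
  have "c_tilde t = asymp_density {n. 0 < digit_diff t n}"
    unfolding c_tilde_def digit_diff_def by simp
  then have "(\<lambda>L. digit_diff_count t (\<lambda>d. 0 < d) (2 ^ L) / 2 ^ L) \<longlonglongrightarrow> c_tilde t"
    using digit_diff_density_dyadic by simp
  moreover have "(\<lambda>L. 1 / 2 + 2 * real t / 2 ^ L) \<longlonglongrightarrow> 1 / 2"
    by real_asymp
  moreover have "\<forall>L\<ge>t. digit_diff_count t (\<lambda>d. 0 < d) (2 ^ L) / 2 ^ L \<le> 1 / 2 + 2 * real t / 2 ^ L"
    using digit_diff_pos_ratio_le[OF mass] large by simp
  ultimately show "c_tilde t \<le> 1 / 2"
    by (blast intro: LIMSEQ_le)
qed

end
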